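(* Assume in addition that $\lambda_A>0$ (the dataset need not be balanced). Let $J=\frac{4\gamma^2}{N\lambda_A}$, $\alpha=\frac1{8+J}$, and let $M$ be a positive integer with $M\ge \frac{2}{\lambda_A\alpha}$ (the paper takes $M=2/(\lambda_A\alpha)$). Then the iterates of TD-SVRG (Algorithm 1) satisfy, for every $m\ge0$, $$\mathbb E[f_d(\tilde\theta_m)]\le\left(\tfrac23\right)^m f_d(\tilde\theta_0).$$
   Context: Finite-sample setting. Let $\mathcal S$ be a finite state space, $\phi:\mathcal S\to\mathbb R^d$ a feature map with $\|\phi(s)\|_2\le 1$ for all $s$, $r:\mathcal S\times\mathcal S\to\mathbb R$ a reward function and $\gamma\in[0,1)$. For a pair of states $(s,s')$ and $\theta\in\mathbb R^d$ let $g_{s,s'}(\theta)=(r(s,s')+\gamma\phi(s')^T\theta-\phi(s)^T\theta)\phi(s)$. A dataset is a state trajectory $s_1,\dots,s_{N+1}$, giving the $N$ pairs $(s_t,s_{t+1})$, $t=1,\dots,N$. Let $A_d=\frac1N\sum_{t=1}^N\phi(s_t)(\phi(s_t)-\gamma\phi(s_{t+1}))^T$ and $b_d=\frac1N\sum_{t=1}^N r(s_t,s_{t+1})\phi(s_t)$, so that $\bar g(\theta):=\frac1N\sum_{t=1}^N g_{s_t,s_{t+1}}(\theta)=-A_d\theta+b_d$. Assume $A_d$ is nonsingular and let $\theta^*=A_d^{-1}b_d$. Let $\lambda_A$ denote the minimum eigenvalue of $(A_d+A_d^T)/2$. Define $f_d(\theta)=(\theta-\theta^* )^TA_d(\theta-\theta^*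 )$. Algorithm 1 (TD-SVRG): given $\alpha>0$, an integer $M\ge1$ and an initial $\tilde\theta_0\in\mathbb R^d$, for epochs $m=1,2,\dots$: set $\tilde\theta=\tilde\theta_{m-1}$, compute $\bar g(\tilde\theta)$, set $\theta_0=\tilde\theta$; for $t=1,\dots,M$ draw an index $i_t$ uniformly from $\{1,\dots,N\}$, independently of everything else, put $(s,s')=(s_{i_t},s_{i_t+1})$, $v_t=g_{s,s'}(\theta_{t-1})-g_{s,s'}(\tilde\theta)+\bar g(\tilde\theta)$ and $\theta_t=\theta_{t-1}+\alpha v_t$; finally set $\tilde\theta_m=\theta_{t'}$ where $t'$ is drawn uniformly from $\{0,\dots,M-1\}$ independently of everything else. *)

theory Defs
  imports "HOL-Analysis.Analysis" "HOL-Probability.Probability"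
begin

text \<open>TD-SVRG setting. Trajectory s_1..s_{N+1} given as a function traj :: nat => 's,
  features phi :: 's => real^'d, reward r, discount gam.\<close>

definition td_g :: "('s \<Rightarrow> real^'d) \<Rightarrow> ('s \<Rightarrow> 's \<Rightarrow> real) \<Rightarrow> real \<Rightarrow> 's \<Rightarrow> 's \<Rightarrow> real^'d \<Rightarrow> real^'d" where
  "td_g phi r gam s s' \<theta> = (r s s' + gam * (phi s' \<bullet> \<theta>) - phi s \<bullet> \<theta>) *\<^sub>R phi s"

definition td_gbar :: "('s \<Rightarrow> real^'d) \<Rightarrow> ('s \<Rightarrow> 's \<Rightarrow> real) \<Rightarrow> real \<Rightarrow> (nat \<Rightarrow> 's) \<Rightarrow> nat \<Rightarrow> real^'d \<Rightarrow> real^'d" where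
  "td_gbar phi r gam traj N \<theta> = (1 / real N) *\<^sub>R (\<Sum>t=1..N. td_g phi r gam (traj t) (traj (t+1)) \<theta>)"

definition outer_prod :: "real^'d \<Rightarrow> real^'d \<Rightarrow> real^'d^'d" where
  "outer_prod a b = (\<chi> i j. a $ i * b $ j)"

definition td_A :: "('s \<Rightarrow> real^'d) \<Rightarrow> real \<Rightarrow> (nat \<Rightarrow> 's) \<Rightarrow> nat \<Rightarrow> real^'d^'d" where
  "td_A phi gam traj N = (1 / real N) *\<^sub>R (\<Sum>t=1..N. outer_prod (phi (traj t)) (phi (traj t) - gam *\<^sub>R phi (traj (t+1))))"

definition td_b :: "('s \<Rightarrow> real^'d) \<Rightarrow> ('s \<Rightarrow> 's \<Rightarrow> real) \<Rightarrow> (nat \<Rightarrow> 's) \<Rightarrow> nat \<Rightarrow> real^'d" where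
  "td_b phi r traj N = (1 / real N) *\<^sub>R (\<Sum>t=1..N. r (traj t) (traj (t+1)) *\<^sub>R phi (traj t))"

definition min_eigenvalue :: "real^'d^'d \<Rightarrow> real" where
  "min_eigenvalue S = Min {l. \<exists>v. v \<noteq> 0 \<and> S *v v = l *\<^sub>R v}"

definition td_lambdaA :: "('s \<Rightarrow> real^'d) \<Rightarrow> real \<Rightarrow> (nat \<Rightarrow> 's) \<Rightarrow> nat \<Rightarrow> real" where
  "td_lambdaA phi gam traj N =
     min_eigenvalue ((1/2) *\<^sub>R (td_A phi gam traj N + transpose (td_A phi gam traj N)))"

definition td_theta_star :: "('s \<Rightarrow> real^'d) \<Rightarrow> ('s \<Rightarrow> 's \<Rightarrow> real) \<Rightarrow> real \<Rightarrow> (nat \<Rightarrow> 's) \<Rightarrow> nat \<Rightarrow> real^'d" where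
  "td_theta_star phi r gam traj N = matrix_inv (td_A phi gam traj N) *v td_b phi r traj N"

definition td_f :: "('s \<Rightarrow> real^'d) \<Rightarrow> ('s \<Rightarrow> 's \<Rightarrow> real) \<Rightarrow> real \<Rightarrow> (nat \<Rightarrow> 's) \<Rightarrow> nat \<Rightarrow> real^'d \<Rightarrow> real" where
  "td_f phi r gam traj N \<theta> =
     (let d = \<theta> - td_theta_star phi r gam traj N in d \<bullet> (td_A phi gam traj N *v d))"

definition svrg_step :: "('s \<Rightarrow> real^'d) \<Rightarrow> ('s \<Rightarrow> 's \<Rightarrow> real) \<Rightarrow> real \<Rightarrow> (nat \<Rightarrow> 's) \<Rightarrow> nat \<Rightarrow> real
     \<Rightarrow> real^'d \<Rightarrow> real^'d \<Rightarrow> (real^'d) pmf" where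
  "svrg_step phi r gam traj N \<alpha> thetat \<theta> =
     map_pmf (\<lambda>i. \<theta> + \<alpha> *\<^sub>R (td_g phi r gam (traj i) (traj (i+1)) \<theta>
                      - td_g phi r gam (traj i) (traj (i+1)) thetat
                      + td_gbar phi r gam traj N thetat))
       (pmf_of_set {1..N})"

fun svrg_inner :: "('s \<Rightarrow> real^'d) \<Rightarrow> ('s \<Rightarrow> 's \<Rightarrow> real) \<Rightarrow> real \<Rightarrow> (nat \<Rightarrow> 's) \<Rightarrow> nat \<Rightarrow> real
     \<Rightarrow> real^'d \<Rightarrow> nat \<Rightarrow> (real^'d) pmf" where
  "svrg_inner phi r gam traj N \<alpha> thetat 0 = return_pmf thetat"
| "svrg_inner phi r gam traj N \<alpha> thetat (Suc t) =
     bind_pmf (svrg_inner phi r gam traj N \<alpha> thetat t) (svrg_step phi r gam traj N \<alpha> thetat)"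

definition svrg_epoch :: "('s \<Rightarrow> real^'d) \<Rightarrow> ('s \<Rightarrow> 's \<Rightarrow> real) \<Rightarrow> real \<Rightarrow> (nat \<Rightarrow> 's) \<Rightarrow> nat \<Rightarrow> real
     \<Rightarrow> nat \<Rightarrow> real^'d \<Rightarrow> (real^'d) pmf" where
  "svrg_epoch phi r gam traj N \<alpha> M thetat =
     bind_pmf (pmf_of_set {0..<M}) (\<lambda>t'. svrg_inner phi r gam traj N \<alpha> thetat t')"

fun td_svrg :: "('s \<Rightarrow> real^'d) \<Rightarrow> ('s \<Rightarrow> 's \<Rightarrow> real) \<Rightarrow> real \<Rightarrow> (nat \<Rightarrow> 's) \<Rightarrow> nat \<Rightarrow> real
     \<Rightarrow> nat \<Rightarrow> real^'d \<Rightarrow> nat \<Rightarrow> (real^'d) pmf" where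
  "td_svrg phi r gam traj N \<alpha> M theta0 0 = return_pmf theta0"
| "td_svrg phi r gam traj N \<alpha> M theta0 (Suc m) =
     bind_pmf (td_svrg phi r gam traj N \<alpha> M theta0 m) (svrg_epoch phi r gam traj N \<alpha> M)"

end

theory Submission
  imports Defs
begin

text \<open>Write \<open>x = \<theta> - \<theta>\<^sup>*\<close>, so \<open>f\<^sub>d(\<theta>) = x\<^sup>T A\<^sub>d x\<close>, let \<open>\<theta>'\<close> be the snapshot of the
  current epoch and \<open>V(z)\<close> the dataset mean of \<open>((\<phi>(s\<^sub>t) - \<gamma> \<phi>(s\<^sub>t\<^sub>+\<^sub>1))\<^sup>T z)\<^sup>2\<close>.
  The variance-reduced direction has mean \<open>-A\<^sub>d x\<close> and second moment at most
  \<open>2 (V(x) + V(\<theta>' - \<theta>\<^sup>*))\<close>. Telescoping the squares \<open>(\<phi>(s\<^sub>t)\<^sup>T z)\<^sup>2\<close> gives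
  \<open>V(z) \<le> 2 z\<^sup>T A\<^sub>d z + \<gamma>\<^sup>2 |z|\<^sup>2 / N\<close>, and \<open>\<lambda>\<^sub>A |z|\<^sup>2 \<le> z\<^sup>T A\<^sub>d z\<close>, so for \<open>\<alpha> = 1/(8 + J)\<close>
  one inner step decreases \<open>E |\<theta>\<^sub>t - \<theta>\<^sup>*|\<^sup>2\<close> by \<open>(3/2) \<alpha> E f\<^sub>d(\<theta>\<^sub>t)\<close> up to an error
  \<open>(\<alpha>/2) f\<^sub>d(\<theta>')\<close>. Summed over an epoch, the initial distance
  \<open>|\<theta>' - \<theta>\<^sup>*|\<^sup>2 \<le> f\<^sub>d(\<theta>')/\<lambda>\<^sub>A\<close> is absorbed because \<open>M \<alpha> \<lambda>\<^sub>A \<ge> 2\<close>; hence the average of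
  \<open>E f\<^sub>d(\<theta>\<^sub>t)\<close> over \<open>t < M\<close>, which is the expectation of \<open>f\<^sub>d\<close> at the epoch output, is at
  most \<open>(2/3) f\<^sub>d(\<theta>')\<close>.\<close>

lemma expectation_bind_pmf_finite:
  fixes h :: "'b \<Rightarrow> real"
  assumes fin: "finite (set_pmf p)" and fin_f: "\<And>x. x \<in> set_pmf p \<Longrightarrow> finite (set_pmf (f x))"
  shows "measure_pmf.expectation (bind_pmf p f) h =
         measure_pmf.expectation p (\<lambda>x. measure_pmf.expectation (f x) h)"
  by (simp add: pmf_expectation_bind[OF fin fin_f order_refl] integral_measure_pmf[OF fin])

lemma expectation_mono_pmf_finite:
  fixes f g :: "'b \<Rightarrow> real"
  assumes "finite (set_pmf p)" and "\<And>x. x \<in> set_pmf p \<Longrightarrow> f x \<le> g x"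
  shows "measure_pmf.expectation p f \<le> measure_pmf.expectation p g"
  using assms by (intro integral_mono_AE) (auto simp: integrable_measure_pmf_finite AE_measure_pmf_iff)

lemma expectation_affine_pmf_finite:
  fixes f g :: "'b \<Rightarrow> real"
  assumes "finite (set_pmf p)"
  shows "measure_pmf.expectation p (\<lambda>x. f x - k * g x + b) =
         measure_pmf.expectation p f - k * measure_pmf.expectation p g + b"
  using assms by (simp add: integrable_measure_pmf_finite)

lemma descent_sum_bound:
  fixes d Q :: "nat \<Rightarrow> real"
  assumes "\<And>n. d (Suc n) \<le> d n - k * Q n + b"
  shows "d n + k * (\<Sum>t<n. Q t) \<le> d 0 + real n * b"
proof (induction n)
  case (Suc n)
  then show ?case using assms[of n] by (simp add: algebra_simps)
qed simp

lemma sum_norm_sq_sub_mean_le: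
  fixes W :: "'i \<Rightarrow> 'a::real_inner"
  assumes "finite I"
  shows "(\<Sum>i\<in>I. (norm (W i - (1 / real (card I)) *\<^sub>R (\<Sum>j\<in>I. W j)))\<^sup>2)
         \<le> (\<Sum>i\<in>I. (norm (W i))\<^sup>2)"
proof (cases "I = {}")
  case False
  define n where "n = real (card I)"
  define m where "m = (1 / n) *\<^sub>R (\<Sum>j\<in>I. W j)"
  have n_pos: "n > 0" using assms False by (simp add: n_def card_gt_0_iff)
  then have sum_W: "(\<Sum>j\<in>I. W j) = n *\<^sub>R m" by (simp add: m_def)
  have "(\<Sum>i\<in>I. (norm (W i - m))\<^sup>2) = (\<Sum>i\<in>I. (norm (W i))\<^sup>2) - 2 * (m \<bullet> (\<Sum>j\<in>I. W j)) + n * (norm m)\<^sup>2"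
    by (simp add: power2_norm_eq_inner inner_diff_left inner_diff_right inner_commute
        sum.distrib sum_subtractf inner_sum_right sum_distrib_left n_def)
  also have "\<dots> = (\<Sum>i\<in>I. (norm (W i))\<^sup>2) - n * (norm m)\<^sup>2"
    by (simp add: sum_W power2_norm_eq_inner)
  finally show ?thesis using n_pos by (simp add: m_def n_def)
qed simp

lemma sum_norm_sq_perturb_le:
  fixes x :: "'a::real_inner"
  assumes "finite I" and sum_D: "(\<Sum>i\<in>I. D i) = 0"
  shows "(\<Sum>i\<in>I. (norm (x + c *\<^sub>R (D i - P i)))\<^sup>2)
         \<le> real (card I) * (norm x)\<^sup>2 - 2 * c * (\<Sum>i\<in>I. x \<bullet> P i)
           + 2 * c\<^sup>2 * ((\<Sum>i\<in>I. (norm (D i))\<^sup>2) + (\<Sum>i\<in>I. (norm (P i))\<^sup>2))"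
proof -
  have expand: "(norm (x + c *\<^sub>R (D i - P i)))\<^sup>2
      = (norm x)\<^sup>2 + 2 * c * (x \<bullet> D i) - 2 * c * (x \<bullet> P i) + c\<^sup>2 * (norm (D i - P i))\<^sup>2" for i
    unfolding power2_norm_eq_inner
    by (simp add: inner_add_left inner_add_right inner_diff_right inner_commute power2_eq_square
        algebra_simps)
  have "(norm (D i - P i))\<^sup>2 \<le> 2 * (norm (D i))\<^sup>2 + 2 * (norm (P i))\<^sup>2" for i
  proof -
    have "(norm (D i - P i))\<^sup>2 \<le> (norm (D i) + norm (P i))\<^sup>2"
      by (simp add: norm_triangle_ineq4 power_mono)
    also have "\<dots> \<le> 2 * (norm (D i))\<^sup>2 + 2 * (norm (P i))\<^sup>2"
      using sum_squares_bound[of "norm (D i)" "norm (P i)"] by (simp add: power2_sum)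
    finally show ?thesis .
  qed
  then have "c\<^sup>2 * (\<Sum>i\<in>I. (norm (D i - P i))\<^sup>2) \<le> c\<^sup>2 * (\<Sum>i\<in>I. 2 * (norm (D i))\<^sup>2 + 2 * (norm (P i))\<^sup>2)"
    by (intro mult_left_mono sum_mono) auto
  moreover have "(\<Sum>i\<in>I. x \<bullet> D i) = 0"
    using sum_D by (simp flip: inner_sum_right)
  ultimately show ?thesis
    unfolding expand sum.distrib sum_subtractf
    by (simp add: algebra_simps flip: sum_distrib_left)
qed

lemma linear_coeff_eq_0_if_quadratic_nonneg:
  fixes b c :: real
  assumes "\<And>t. 0 \<le> b * t + c * t\<^sup>2"
  shows "b = 0"
proof (rule ccontr)
  assume "b \<noteq> 0"
  define d where "d = \<bar>c\<bar> + 1"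
  have "d > 0" "c < d" by (auto simp: d_def)
  define t where "t = - b / d"
  have "b * t + c * t\<^sup>2 = - b\<^sup>2 * (d - c) / d\<^sup>2"
    using \<open>d > 0\<close> by (simp add: t_def field_simps power2_eq_square)
  also have "\<dots> < 0"
    using \<open>b \<noteq> 0\<close> \<open>d > 0\<close> \<open>c < d\<close> by (intro divide_neg_pos mult_neg_pos) auto
  finally show False using assms[of t] by simp
qed

lemma symmetric_matrix_inner_commute:
  fixes S :: "real^'n^'n"
  assumes "transpose S = S"
  shows "u \<bullet> (S *v v) = (S *v u) \<bullet> v"
  by (metis assms dot_lmul_matrix transpose_matrix_vector)

lemma finite_eigenvalues_symmetric:
  fixes S :: "real^'n^'n"
  assumes sym: "transpose S = S"
  shows "finite {l. \<exists>v. v \<noteq> 0 \<and> S *v v = l *\<^sub>R v}" (is "finite ?E")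
proof -
  define ev where "ev l = (SOME v. v \<noteq> 0 \<and> S *v v = l *\<^sub>R v)" for l
  have ev: "ev l \<noteq> 0 \<and> S *v ev l = l *\<^sub>R ev l" if "l \<in> ?E" for l
  proof -
    from that have "\<exists>v. v \<noteq> 0 \<and> S *v v = l *\<^sub>R v" by simp
    then show ?thesis unfolding ev_def by (rule someI_ex)
  qed
  have inj: "inj_on ev ?E"
  proof (rule inj_onI)
    fix l m assume l: "l \<in> ?E" and m: "m \<in> ?E" and "ev l = ev m"
    then have "l *\<^sub>R ev l = m *\<^sub>R ev l" using ev[OF l] ev[OF m] by metis
    then show "l = m" using ev[OF l] by (simp add: scaleR_cancel_right)
  qed
  have "pairwise orthogonal (ev ` ?E)"
  proof (rule pairwise_imageI)
    fix l m assume l: "l \<in> ?E" and m: "m \<in> ?E" and "l \<noteq> m"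
    have "m * (ev l \<bullet> ev m) = l * (ev l \<bullet> ev m)"
      using symmetric_matrix_inner_commute[OF sym, of "ev l" "ev m"] ev[OF l] ev[OF m] by simp
    then show "orthogonal (ev l) (ev m)" using \<open>l \<noteq> m\<close> by (simp add: orthogonal_def)
  qed
  moreover have "0 \<notin> ev ` ?E"
  proof
    assume "0 \<in> ev ` ?E"
    then obtain l where "0 = ev l" and "l \<in> ?E" by (rule imageE)
    then show False using ev by metis
  qed
  ultimately have "independent (ev ` ?E)" by (rule pairwise_orthogonal_independent)
  then have "finite (ev ` ?E)" using independent_bound by blast
  then show ?thesis using inj by (rule finite_imageD)
qed

lemma rayleigh_minimizer_is_eigenvector:
  fixes S :: "real^'n^'n"
  assumes sym: "transpose S = S" and x: "norm x = 1"
    and min: "\<And>y. (x \<bullet> (S *v x)) * (norm y)\<^sup>2 \<le> y \<bullet> (S *v y)"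
  shows "S *v x = (x \<bullet> (S *v x)) *\<^sub>R x"
proof -
  define mu where "mu = x \<bullet> (S *v x)"
  have "2 * (w \<bullet> (S *v x - mu *\<^sub>R x)) = 0" for w
  proof (rule linear_coeff_eq_0_if_quadratic_nonneg)
    fix t
    have "x \<bullet> x = 1" using x by (simp add: dot_square_norm)
    then have "(norm (x + t *\<^sub>R w))\<^sup>2 = 1 + 2 * t * (w \<bullet> x) + t\<^sup>2 * (norm w)\<^sup>2"
      unfolding power2_norm_eq_inner
      by (simp add: inner_add_left inner_add_right inner_commute[of x w] power2_eq_square algebra_simps)
    moreover have "x \<bullet> (S *v w) = w \<bullet> (S *v x)"
      using symmetric_matrix_inner_commute[OF sym, of x w] by (simp add: inner_commute)
    ultimately have "(x + t *\<^sub>R w) \<bullet> (S *v (x + t *\<^sub>R w)) - mu * (norm (x + t *\<^sub>R w))\<^sup>2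
        = 2 * (w \<bullet> (S *v x - mu *\<^sub>R x)) * t + (w \<bullet> (S *v w) - mu * (norm w)\<^sup>2) * t\<^sup>2"
      by (simp add: mu_def matrix_vector_right_distrib matrix_vector_mult_scaleR inner_add_left
          inner_add_right inner_diff_right power2_eq_square algebra_simps)
    then show "0 \<le> 2 * (w \<bullet> (S *v x - mu *\<^sub>R x)) * t + (w \<bullet> (S *v w) - mu * (norm w)\<^sup>2) * t\<^sup>2"
      using min[of "x + t *\<^sub>R w"] by (simp add: mu_def)
  qed
  from this[of "S *v x - mu *\<^sub>R x"] show ?thesis by (simp add: mu_def)
qed

lemma min_eigenvalue_le_quadratic_form:
  fixes S :: "real^'n^'n"
  assumes sym: "transpose S = S"
  shows "min_eigenvalue S * (norm z)\<^sup>2 \<le> z \<bullet> (S *v z)"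
proof -
  have "continuous_on (sphere 0 1) (\<lambda>y. y \<bullet> (S *v y))"
    by (intro continuous_intros linear_continuous_on matrix_vector_mul_bounded_linear)
  moreover have "sphere (0::real^'n) 1 \<noteq> {}" by simp
  ultimately obtain x where x: "x \<in> sphere 0 1"
    and x_min: "\<And>y. y \<in> sphere 0 1 \<Longrightarrow> x \<bullet> (S *v x) \<le> y \<bullet> (S *v y)"
    using continuous_attains_inf[OF compact_sphere] by blast
  have lower: "(x \<bullet> (S *v x)) * (norm y)\<^sup>2 \<le> y \<bullet> (S *v y)" for y
  proof (cases "y = 0")
    case False
    then have "x \<bullet> (S *v x) \<le> (y /\<^sub>R norm y) \<bullet> (S *v (y /\<^sub>R norm y))" by (intro x_min) simp
    also have "\<dots> = y \<bullet> (S *v y) / (norm y)\<^sup>2"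
      by (simp add: matrix_vector_mult_scaleR power2_eq_square divide_inverse)
    finally show ?thesis using False by (simp add: pos_le_divide_eq)
  qed simp
  have "S *v x = (x \<bullet> (S *v x)) *\<^sub>R x" "x \<noteq> 0"
    using rayleigh_minimizer_is_eigenvector[OF sym _ lower] x by auto
  then have "min_eigenvalue S \<le> x \<bullet> (S *v x)"
    unfolding min_eigenvalue_def by (intro Min_le finite_eigenvalues_symmetric[OF sym]) blast
  then show ?thesis using lower[of z] by (meson mult_right_mono order_trans zero_le_power2)
qed

locale td_dataset =
  fixes phi :: "'s \<Rightarrow> real^'d" and r :: "'s \<Rightarrow> 's \<Rightarrow> real" and gam :: real
    and traj :: "nat \<Rightarrow> 's" and N :: nat
  assumes norm_phi_le_1: "\<And>s. norm (phi s) \<le> 1"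
    and gam_nonneg: "0 \<le> gam" and gam_less_1: "gam < 1"
    and N_pos: "1 \<le> N"
    and invertible_A: "invertible (td_A phi gam traj N)"
begin

abbreviation "A \<equiv> td_A phi gam traj N"
abbreviation "theta_star \<equiv> td_theta_star phi r gam traj N"
abbreviation "lam \<equiv> td_lambdaA phi gam traj N"

definition feat :: "nat \<Rightarrow> real^'d" where
  "feat t = phi (traj t)"

definition feat_diff :: "nat \<Rightarrow> real^'d" where
  "feat_diff t = phi (traj t) - gam *\<^sub>R phi (traj (t + 1))"

definition quad :: "real^'d \<Rightarrow> real" where
  "quad z = z \<bullet> (A *v z)"

definition mean_sq_feat_diff :: "real^'d \<Rightarrow> real" where
  "mean_sq_feat_diff z = (\<Sum>t=1..N. (feat_diff t \<bullet> z)\<^sup>2) / real N"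

lemma A_mult_eq: "A *v z = (1 / real N) *\<^sub>R (\<Sum>t=1..N. (feat_diff t \<bullet> z) *\<^sub>R feat t)"
proof -
  have "outer_prod u v *v z = (v \<bullet> z) *\<^sub>R u" for u v :: "real^'d"
    by (simp add: vec_eq_iff matrix_vector_mult_def outer_prod_def inner_vec_def sum_distrib_left mult_ac)
  moreover have "(\<Sum>t\<in>T. B t) *v z = (\<Sum>t\<in>T. B t *v z)" for T and B :: "nat \<Rightarrow> real^'d^'d"
    by (induction T rule: infinite_finite_induct) (auto simp: matrix_vector_mult_add_rdistrib)
  ultimately show ?thesis
    by (simp add: td_A_def scaleR_matrix_vector_assoc[symmetric] feat_def feat_diff_def)
qed

lemma A_mult_theta_star: "A *v theta_star = td_b phi r traj N"
proof -
  have "A ** matrix_inv A = mat 1"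
    using invertible_A unfolding invertible_def matrix_inv_def by (rule someI2_ex) auto
  then show ?thesis by (simp add: td_theta_star_def matrix_vector_mul_assoc)
qed

lemma td_g_eq: "td_g phi r gam (traj t) (traj (t + 1)) \<theta> = (r (traj t) (traj (t + 1)) - feat_diff t \<bullet> \<theta>) *\<^sub>R feat t"
  by (simp add: td_g_def feat_def feat_diff_def inner_diff_left algebra_simps)

lemma td_gbar_eq: "td_gbar phi r gam traj N \<theta> = - (A *v (\<theta> - theta_star))"
proof -
  have "td_gbar phi r gam traj N \<theta> = td_b phi r traj N - A *v \<theta>"
    unfolding td_gbar_def td_b_def A_mult_eq td_g_eq
    by (simp add: feat_def scaleR_diff_left sum_subtractf scaleR_diff_right)
  then show ?thesis by (simp add: matrix_vector_mult_diff_distrib A_mult_theta_star)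
qed

lemma quad_eq_mean: "quad z = (\<Sum>t=1..N. (feat_diff t \<bullet> z) * (feat t \<bullet> z)) / real N"
  by (simp add: quad_def A_mult_eq inner_sum_right inner_commute mult.commute)

lemma td_f_eq: "td_f phi r gam traj N \<theta> = quad (\<theta> - theta_star)"
  by (simp add: td_f_def quad_def Let_def)

lemma phi_inner_sq_le: "(phi s \<bullet> z)\<^sup>2 \<le> (norm z)\<^sup>2"
proof -
  have "\<bar>phi s \<bullet> z\<bar> \<le> norm z"
    using Cauchy_Schwarz_ineq2[of "phi s" z] norm_phi_le_1[of s]
    by (meson mult_left_le_one_le norm_ge_zero order_trans)
  then show ?thesis by (metis abs_ge_zero power2_abs power_mono)
qed

lemma sum_norm_sq_sample_le:
  "(\<Sum>i=1..N. (norm ((feat_diff i \<bullet> z) *\<^sub>R feat i))\<^sup>2) \<le> real N * mean_sq_feat_diff z"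
proof -
  have "(norm (feat i))\<^sup>2 \<le> 1" for i
    using norm_phi_le_1 by (simp add: feat_def power_le_one)
  then have "(\<Sum>i=1..N. (norm ((feat_diff i \<bullet> z) *\<^sub>R feat i))\<^sup>2) \<le> (\<Sum>i=1..N. (feat_diff i \<bullet> z)\<^sup>2)"
    by (intro sum_mono) (simp add: power_mult_distrib mult_left_le)
  then show ?thesis
    using N_pos by (simp add: mean_sq_feat_diff_def)
qed

lemma quad_ge_lambda: "lam * (norm z)\<^sup>2 \<le> quad z"
proof -
  let ?S = "(1/2) *\<^sub>R (A + transpose A)"
  have "transpose ?S = ?S"
    by (simp add: vec_eq_iff transpose_def)
  moreover have "z \<bullet> (?S *v z) = quad z"
    by (simp add: quad_def scaleR_matrix_vector_assoc[symmetric] matrix_vector_mult_add_rdistrib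
        inner_add_right dot_lmul_matrix[symmetric] inner_commute)
  ultimately show ?thesis
    using min_eigenvalue_le_quadratic_form[of ?S z] by (simp add: td_lambdaA_def)
qed

lemma mean_sq_feat_diff_le: "mean_sq_feat_diff z \<le> 2 * quad z + gam\<^sup>2 * (norm z)\<^sup>2 / real N"
proof -
  let ?u = "\<lambda>t. (feat t \<bullet> z)\<^sup>2"
  have split: "(feat_diff t \<bullet> z)\<^sup>2
      = 2 * ((feat_diff t \<bullet> z) * (feat t \<bullet> z)) - (1 - gam\<^sup>2) * ?u t + gam\<^sup>2 * (?u (Suc t) - ?u t)" for t
    by (simp add: feat_diff_def feat_def inner_diff_left power2_eq_square algebra_simps)
  have "(\<Sum>t=1..N. (feat_diff t \<bullet> z)\<^sup>2)
      = 2 * (\<Sum>t=1..N. (feat_diff t \<bullet> z) * (feat t \<bullet> z)) - (1 - gam\<^sup>2) * (\<Sum>t=1..N. ?u t)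
        + gam\<^sup>2 * (\<Sum>t=1..N. ?u (Suc t) - ?u t)"
    unfolding split by (simp add: sum.distrib sum_subtractf sum_distrib_left right_diff_distrib)
  also have "(\<Sum>t=1..N. ?u (Suc t) - ?u t) = ?u (Suc N) - ?u 1"
    using N_pos by (rule sum_Suc_diff[OF le_SucI])
  finally have sum_eq: "(\<Sum>t=1..N. (feat_diff t \<bullet> z)\<^sup>2)
      = 2 * (\<Sum>t=1..N. (feat_diff t \<bullet> z) * (feat t \<bullet> z)) - (1 - gam\<^sup>2) * (\<Sum>t=1..N. ?u t)
        + gam\<^sup>2 * (?u (Suc N) - ?u 1)" .
  have "0 \<le> (1 - gam\<^sup>2) * (\<Sum>t=1..N. ?u t)"
    using gam_nonneg gam_less_1 by (intro mult_nonneg_nonneg sum_nonneg) (auto simp: power_le_one)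
  moreover have "gam\<^sup>2 * (?u (Suc N) - ?u 1) \<le> gam\<^sup>2 * (norm z)\<^sup>2"
  proof (rule mult_left_mono)
    have "?u (Suc N) - ?u 1 \<le> ?u (Suc N)" by simp
    also have "\<dots> \<le> (norm z)\<^sup>2" unfolding feat_def by (rule phi_inner_sq_le)
    finally show "?u (Suc N) - ?u 1 \<le> (norm z)\<^sup>2" .
  qed simp
  ultimately have "(\<Sum>t=1..N. (feat_diff t \<bullet> z)\<^sup>2)
      \<le> 2 * (\<Sum>t=1..N. (feat_diff t \<bullet> z) * (feat t \<bullet> z)) + gam\<^sup>2 * (norm z)\<^sup>2"
    unfolding sum_eq by linarith
  then have "(\<Sum>t=1..N. (feat_diff t \<bullet> z)\<^sup>2) / real N
      \<le> (2 * (\<Sum>t=1..N. (feat_diff t \<bullet> z) * (feat t \<bullet> z)) + gam\<^sup>2 * (norm z)\<^sup>2) / real N"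
    by (rule divide_right_mono) simp
  then show ?thesis
    by (simp add: mean_sq_feat_diff_def quad_eq_mean add_divide_distrib)
qed

lemma finite_set_svrg_step: "finite (set_pmf (svrg_step phi r gam traj N \<alpha> \<theta>' \<theta>))"
  using N_pos by (simp add: svrg_step_def)

lemma finite_set_svrg_inner: "finite (set_pmf (svrg_inner phi r gam traj N \<alpha> \<theta>' t))"
  by (induction t) (auto simp: finite_set_svrg_step)

lemma finite_set_svrg_epoch:
  assumes "1 \<le> M"
  shows "finite (set_pmf (svrg_epoch phi r gam traj N \<alpha> M \<theta>'))"
  using assms by (auto simp: svrg_epoch_def finite_set_svrg_inner)

lemma finite_set_td_svrg:
  assumes "1 \<le> M"
  shows "finite (set_pmf (td_svrg phi r gam traj N \<alpha> M \<theta>\<^sub>0 m))"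
  using assms by (induction m) (auto simp: finite_set_svrg_epoch)

lemma expectation_svrg_epoch:
  assumes "1 \<le> M"
  shows "measure_pmf.expectation (svrg_epoch phi r gam traj N \<alpha> M \<theta>') f
         = (\<Sum>t<M. measure_pmf.expectation (svrg_inner phi r gam traj N \<alpha> \<theta>' t) f) / real M"
proof -
  have "measure_pmf.expectation (svrg_epoch phi r gam traj N \<alpha> M \<theta>') f
      = (\<Sum>t\<in>{0..<M}. measure_pmf.expectation (svrg_inner phi r gam traj N \<alpha> \<theta>' t) f /\<^sub>R real (card {0..<M}))"
    unfolding svrg_epoch_def
    by (intro pmf_expectation_bind_pmf_of_set) (use assms in \<open>auto simp: finite_set_svrg_inner\<close>)
  then show ?thesis
    by (simp add: atLeast0LessThan sum_divide_distrib divide_inverse_commute sum_distrib_left)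
qed

lemma svrg_step_sub_theta_star:
  "\<theta> + \<alpha> *\<^sub>R (td_g phi r gam (traj i) (traj (i + 1)) \<theta> - td_g phi r gam (traj i) (traj (i + 1)) \<theta>'
      + td_gbar phi r gam traj N \<theta>') - theta_star
   = (\<theta> - theta_star) + \<alpha> *\<^sub>R ((feat_diff i \<bullet> (\<theta>' - theta_star)) *\<^sub>R feat i - A *v (\<theta>' - theta_star)
      - (feat_diff i \<bullet> (\<theta> - theta_star)) *\<^sub>R feat i)"
  unfolding td_g_eq td_gbar_eq
  by (simp add: inner_diff_right scaleR_diff_left algebra_simps)

lemma svrg_step_sq_dist_le:
  "measure_pmf.expectation (svrg_step phi r gam traj N \<alpha> \<theta>' \<theta>) (\<lambda>z. (norm (z - theta_star))\<^sup>2)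
   \<le> (norm (\<theta> - theta_star))\<^sup>2 - 2 * \<alpha> * quad (\<theta> - theta_star)
      + 2 * \<alpha>\<^sup>2 * (mean_sq_feat_diff (\<theta> - theta_star) + mean_sq_feat_diff (\<theta>' - theta_star))"
proof -
  define x where "x = \<theta> - theta_star"
  define y where "y = \<theta>' - theta_star"
  define P where "P i = (feat_diff i \<bullet> x) *\<^sub>R feat i" for i
  define W where "W i = (feat_diff i \<bullet> y) *\<^sub>R feat i" for i
  have N_gt_0: "real N > 0"
    using N_pos by simp
  have A_y: "A *v y = (1 / real (card {1..N})) *\<^sub>R (\<Sum>j=1..N. W j)"
    by (simp add: A_mult_eq W_def)
  have sum_centred: "(\<Sum>i=1..N. W i - A *v y) = 0"
    using N_gt_0 unfolding sum_subtractf real_vector.sum_constant_scale A_y by simp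
  have sum_P: "(\<Sum>i=1..N. x \<bullet> P i) = real N * quad x"
    using N_gt_0 by (simp add: quad_eq_mean P_def inner_commute mult_ac)
  have sum_W_sq: "(\<Sum>i=1..N. (norm (W i - A *v y))\<^sup>2) \<le> real N * mean_sq_feat_diff y"
  proof -
    have "(\<Sum>i=1..N. (norm (W i - A *v y))\<^sup>2) \<le> (\<Sum>i=1..N. (norm (W i))\<^sup>2)"
      unfolding A_y by (rule sum_norm_sq_sub_mean_le) simp
    also have "\<dots> \<le> real N * mean_sq_feat_diff y"
      unfolding W_def by (rule sum_norm_sq_sample_le)
    finally show ?thesis .
  qed
  have sum_P_sq: "(\<Sum>i=1..N. (norm (P i))\<^sup>2) \<le> real N * mean_sq_feat_diff x"
    unfolding P_def by (rule sum_norm_sq_sample_le)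
  have "(\<Sum>i=1..N. (norm (x + \<alpha> *\<^sub>R ((W i - A *v y) - P i)))\<^sup>2)
      \<le> real N * (norm x)\<^sup>2 - 2 * \<alpha> * (\<Sum>i=1..N. x \<bullet> P i)
        + 2 * \<alpha>\<^sup>2 * ((\<Sum>i=1..N. (norm (W i - A *v y))\<^sup>2) + (\<Sum>i=1..N. (norm (P i))\<^sup>2))"
    using sum_norm_sq_perturb_le[OF finite_atLeastAtMost sum_centred, of x \<alpha> P] by simp
  also have "\<dots> \<le> real N * (norm x)\<^sup>2 - 2 * \<alpha> * (real N * quad x)
      + 2 * \<alpha>\<^sup>2 * (real N * mean_sq_feat_diff y + real N * mean_sq_feat_diff x)"
    unfolding sum_P using sum_W_sq sum_P_sq by (intro add_left_mono mult_left_mono add_mono) auto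
  also have "\<dots> = real N * ((norm x)\<^sup>2 - 2 * \<alpha> * quad x + 2 * \<alpha>\<^sup>2 * (mean_sq_feat_diff x + mean_sq_feat_diff y))"
    by (simp add: algebra_simps)
  finally have "(\<Sum>i=1..N. (norm (x + \<alpha> *\<^sub>R ((W i - A *v y) - P i)))\<^sup>2) / real N
      \<le> (norm x)\<^sup>2 - 2 * \<alpha> * quad x + 2 * \<alpha>\<^sup>2 * (mean_sq_feat_diff x + mean_sq_feat_diff y)"
    using N_gt_0 by (simp add: pos_divide_le_eq mult.commute)
  then show ?thesis
    unfolding svrg_step_def integral_map_pmf svrg_step_sub_theta_star
    using N_pos by (simp add: integral_pmf_of_set x_def y_def P_def W_def)
qed

end

locale td_dataset_posdef = td_dataset +
  assumes lambda_pos: "0 < td_lambdaA phi gam traj N"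
begin

lemma quad_nonneg: "0 \<le> quad z"
  using quad_ge_lambda[of z] lambda_pos by (smt (verit) mult_nonneg_nonneg zero_le_power2)

lemma mean_sq_feat_diff_le_quad: "mean_sq_feat_diff z \<le> (2 + gam\<^sup>2 / (real N * lam)) * quad z"
proof -
  have "gam\<^sup>2 * (norm z)\<^sup>2 / real N \<le> gam\<^sup>2 * (quad z / lam) / real N"
    using quad_ge_lambda[of z] lambda_pos
    by (intro divide_right_mono mult_left_mono) (auto simp: pos_le_divide_eq mult.commute)
  then show ?thesis
    using mean_sq_feat_diff_le[of z] by (simp add: algebra_simps)
qed

context
  fixes \<alpha> :: real
  assumes alpha_pos: "0 < \<alpha>" and alpha_le: "\<alpha> * (2 + gam\<^sup>2 / (real N * lam)) \<le> 1 / 4"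
begin

lemma svrg_step_sq_dist_descent:
  "measure_pmf.expectation (svrg_step phi r gam traj N \<alpha> \<theta>' \<theta>) (\<lambda>z. (norm (z - theta_star))\<^sup>2)
   \<le> (norm (\<theta> - theta_star))\<^sup>2 - 3 / 2 * \<alpha> * quad (\<theta> - theta_star) + \<alpha> / 2 * quad (\<theta>' - theta_star)"
proof -
  have "2 * \<alpha>\<^sup>2 * mean_sq_feat_diff z \<le> \<alpha> / 2 * quad z" for z
  proof -
    have "2 * \<alpha>\<^sup>2 * mean_sq_feat_diff z \<le> 2 * \<alpha> * (\<alpha> * (2 + gam\<^sup>2 / (real N * lam))) * quad z"
      using mult_left_mono[OF mean_sq_feat_diff_le_quad[of z], of "2 * \<alpha>\<^sup>2"] alpha_pos
      by (simp add: power2_eq_square mult_ac)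
    also have "\<dots> \<le> 2 * \<alpha> * (1 / 4) * quad z"
      using alpha_pos alpha_le quad_nonneg[of z] by (intro mult_right_mono mult_left_mono) auto
    finally show ?thesis by simp
  qed
  then have "2 * \<alpha>\<^sup>2 * (mean_sq_feat_diff (\<theta> - theta_star) + mean_sq_feat_diff (\<theta>' - theta_star))
      \<le> \<alpha> / 2 * quad (\<theta> - theta_star) + \<alpha> / 2 * quad (\<theta>' - theta_star)"
    by (simp add: distrib_left add_mono)
  with svrg_step_sq_dist_le[of \<alpha> \<theta>' \<theta>] show ?thesis
    by (simp add: algebra_simps)
qed

lemma svrg_inner_sq_dist_descent:
  "measure_pmf.expectation (svrg_inner phi r gam traj N \<alpha> \<theta>' (Suc t)) (\<lambda>z. (norm (z - theta_star))\<^sup>2)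
   \<le> measure_pmf.expectation (svrg_inner phi r gam traj N \<alpha> \<theta>' t) (\<lambda>z. (norm (z - theta_star))\<^sup>2)
     - 3 / 2 * \<alpha> * measure_pmf.expectation (svrg_inner phi r gam traj N \<alpha> \<theta>' t) (td_f phi r gam traj N)
     + \<alpha> / 2 * quad (\<theta>' - theta_star)"
proof -
  let ?p = "svrg_inner phi r gam traj N \<alpha> \<theta>' t"
  have "measure_pmf.expectation (svrg_inner phi r gam traj N \<alpha> \<theta>' (Suc t)) (\<lambda>z. (norm (z - theta_star))\<^sup>2)
      = measure_pmf.expectation ?p
          (\<lambda>\<theta>. measure_pmf.expectation (svrg_step phi r gam traj N \<alpha> \<theta>' \<theta>) (\<lambda>z. (norm (z - theta_star))\<^sup>2))"
    by (simp add: expectation_bind_pmf_finite finite_set_svrg_inner finite_set_svrg_step)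
  also have "\<dots> \<le> measure_pmf.expectation ?p (\<lambda>\<theta>. (norm (\<theta> - theta_star))\<^sup>2
      - 3 / 2 * \<alpha> * td_f phi r gam traj N \<theta> + \<alpha> / 2 * quad (\<theta>' - theta_star))"
    by (rule expectation_mono_pmf_finite[OF finite_set_svrg_inner])
       (use svrg_step_sq_dist_descent in \<open>simp add: td_f_eq\<close>)
  also have "\<dots> = measure_pmf.expectation ?p (\<lambda>z. (norm (z - theta_star))\<^sup>2)
      - 3 / 2 * \<alpha> * measure_pmf.expectation ?p (td_f phi r gam traj N) + \<alpha> / 2 * quad (\<theta>' - theta_star)"
    by (rule expectation_affine_pmf_finite[OF finite_set_svrg_inner])
  finally show ?thesis .
qed

lemma svrg_epoch_contraction:
  assumes "1 \<le> M" and M_large: "2 \<le> real M * \<alpha> * lam"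
  shows "measure_pmf.expectation (svrg_epoch phi r gam traj N \<alpha> M \<theta>') (td_f phi r gam traj N)
         \<le> 2 / 3 * td_f phi r gam traj N \<theta>'"
proof -
  define dist where "dist t = measure_pmf.expectation (svrg_inner phi r gam traj N \<alpha> \<theta>' t) (\<lambda>z. (norm (z - theta_star))\<^sup>2)" for t
  define F where "F t = measure_pmf.expectation (svrg_inner phi r gam traj N \<alpha> \<theta>' t) (td_f phi r gam traj N)" for t
  define q where "q = quad (\<theta>' - theta_star)"
  have "dist M + 3 / 2 * \<alpha> * (\<Sum>t<M. F t) \<le> dist 0 + real M * (\<alpha> / 2 * q)"
    by (rule descent_sum_bound) (unfold dist_def F_def q_def, rule svrg_inner_sq_dist_descent)
  moreover have "0 \<le> dist M"
    by (simp add: dist_def)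
  moreover have "dist 0 \<le> q / lam"
    using quad_ge_lambda[of "\<theta>' - theta_star"] lambda_pos
    by (simp add: dist_def q_def pos_le_divide_eq mult.commute)
  moreover have "q / lam \<le> real M * (\<alpha> / 2 * q)"
  proof -
    have "2 / lam \<le> real M * \<alpha>"
      using M_large lambda_pos by (simp add: pos_divide_le_eq)
    then have "2 / lam * (q / 2) \<le> real M * \<alpha> * (q / 2)"
      using quad_nonneg[of "\<theta>' - theta_star"] by (intro mult_right_mono) (auto simp: q_def)
    then show ?thesis by (simp add: mult_ac)
  qed
  ultimately have "3 / 2 * \<alpha> * (\<Sum>t<M. F t) \<le> real M * (\<alpha> / 2 * q) + real M * (\<alpha> / 2 * q)"
    by linarith
  then have "\<alpha> * (3 / 2 * (\<Sum>t<M. F t)) \<le> \<alpha> * (real M * q)"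
    by (simp add: algebra_simps)
  then have "(\<Sum>t<M. F t) \<le> 2 / 3 * real M * q"
    using alpha_pos mult_left_le_imp_le by fastforce
  moreover have "measure_pmf.expectation (svrg_epoch phi r gam traj N \<alpha> M \<theta>') (td_f phi r gam traj N)
      = (\<Sum>t<M. F t) / real M"
    unfolding F_def by (rule expectation_svrg_epoch[OF \<open>1 \<le> M\<close>])
  ultimately show ?thesis
    using \<open>1 \<le> M\<close> by (simp add: td_f_eq q_def pos_divide_le_eq mult_ac)
qed

lemma td_svrg_expectation_le:
  assumes "1 \<le> M" and "2 \<le> real M * \<alpha> * lam"
  shows "measure_pmf.expectation (td_svrg phi r gam traj N \<alpha> M \<theta>\<^sub>0 m) (td_f phi r gam traj N)
         \<le> (2 / 3) ^ m * td_f phi r gam traj N \<theta>\<^sub>0"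
proof (induction m)
  case (Suc m)
  let ?p = "td_svrg phi r gam traj N \<alpha> M \<theta>\<^sub>0 m"
  have "measure_pmf.expectation (td_svrg phi r gam traj N \<alpha> M \<theta>\<^sub>0 (Suc m)) (td_f phi r gam traj N)
      = measure_pmf.expectation ?p
          (\<lambda>\<theta>'. measure_pmf.expectation (svrg_epoch phi r gam traj N \<alpha> M \<theta>') (td_f phi r gam traj N))"
    using assms(1) by (simp add: expectation_bind_pmf_finite finite_set_td_svrg finite_set_svrg_epoch)
  also have "\<dots> \<le> measure_pmf.expectation ?p (\<lambda>\<theta>'. 2 / 3 * td_f phi r gam traj N \<theta>')"
    by (rule expectation_mono_pmf_finite[OF finite_set_td_svrg[OF assms(1)]])
       (rule svrg_epoch_contraction[OF assms])
  also have "\<dots> \<le> 2 / 3 * ((2 / 3) ^ m * td_f phi r gam traj N \<theta>\<^sub>0)"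
    using Suc.IH by simp
  finally show ?case by simp
qed simp

end

end

theorem theorem1:
  fixes phi :: "'s::finite \<Rightarrow> real^'d" and r :: "'s \<Rightarrow> 's \<Rightarrow> real"
    and gam :: real and traj :: "nat \<Rightarrow> 's" and N M :: nat and theta0 :: "real^'d"
  assumes "\<And>s. norm (phi s) \<le> 1"
    and "0 \<le> gam" and "gam < 1"
    and "N \<ge> 1"
    and "invertible (td_A phi gam traj N)"
    and "td_lambdaA phi gam traj N > 0"
    and "M \<ge> 1"
    and "real M \<ge> 2 / (td_lambdaA phi gam traj N *
            (1 / (8 + 4 * gam\<^sup>2 / (real N * td_lambdaA phi gam traj N))))"
  shows "\<forall>m. measure_pmf.expectation
              (td_svrg phi r gam traj N (1 / (8 + 4 * gam\<^sup>2 / (real N * td_lambdaA phi gam traj N))) M theta0 m)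
              (td_f phi r gam traj N)
           \<le> (2/3) ^ m * td_f phi r gam traj N theta0"
proof -
  interpret td_dataset_posdef phi r gam traj N
    using assms by unfold_locales auto
  define \<alpha> where "\<alpha> = 1 / (8 + 4 * gam\<^sup>2 / (real N * lam))"
  have "0 \<le> gam\<^sup>2 / (real N * lam)"
    using lambda_pos by simp
  then have alpha_pos: "0 < \<alpha>" and alpha_le: "\<alpha> * (2 + gam\<^sup>2 / (real N * lam)) \<le> 1 / 4"
    by (auto simp: \<alpha>_def field_simps)
  have "2 \<le> real M * \<alpha> * lam"
    using assms(8) lambda_pos alpha_pos by (simp add: \<alpha>_def[symmetric] pos_divide_le_eq mult_ac)
  then show ?thesis
    using td_svrg_expectation_le[OF alpha_pos alpha_le assms(7)] unfolding \<alpha>_def by blast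
qed

end
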